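(* Let $Q$ be in the Frobenius normal form described in the context, let $(X_i)_{i\in\mathbb{N}_0}$ be the associated absorbed Markov chain with initial distribution $\pi=(\pi_1,\dots,\pi_k)$ and absorption time $T$, and let $\ell\in\{1,\dots,k\}$. Then for all $n\in\mathbb{N}$: (i) \[ \mathbb{E}_{\pi}\Big[\tfrac{1}{n+1}\#\{m\in\{0,\dots,n\}:X_m\in I_\ell\}\,\Big|\,T>n\Big]=\frac{\sum_{\theta\in\mathcal{P}^{(\ell)}}\pi_{\theta_1}\sum_{r=0}^{n}Q(\underline{\theta^{\ell}},r)\,Q(\overline{\theta^{\ell}},n-r)\mathbf{1}}{(n+1)\sum_{\theta\in\mathcal{P}}\pi_{\theta_1}Q(\theta,n)\mathbf{1}}; \] (ii) for $s\in I_\ell$, with $t(s):=s-\sum_{i=1}^{\ell-1}d_i$ and $e_{t(s)}\in\mathbb{R}^{d_\ell}$ the $t(s)$-th unit vector, \[ \mathbb{E}_{\pi}\Big[\tfrac{1}{n+1}\#\{m\in\{0,\dots,n\}:X_m=s\}\,\Big|\,T>n\Big]=\frac{\sum_{\theta\in\mathcal{P}^{(\ell)}}\pi_{\theta_1}\sum_{r=0}^{n}Q(\underline{\theta^{\ell}},r)\,e_{t(s)}e_{t(s)}^{\top}\,Q(\overline{\theta^{\ell}},n-r)\mathbf{1}}{(n+1)\sum_{\theta\in\mathcal{P}}\pi_{\theta_1}Q(\theta,n)\mathbf{1}}. \]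
   Context: Let $d\ge 2$ and let $P=\begin{pmatrix}1&0\\ R&Q\end{pmatrix}\in\mathbb{R}^{(d+1)\times(d+1)}$ be a stochastic matrix with $R\in\mathbb{R}^{d\times 1}$, $Q\in\mathbb{R}^{d\times d}$, $R,Q\neq0$, where all eigenvalues of $Q$ have modulus $<1$. $(X_i)_{i\in\mathbb{N}_0}$ is the Markov chain on $\{0,\dots,d\}$ with transition matrix $P$ (state $0$ absorbing), initial distribution $\pi$ (row probability vector on $\{1,\dots,d\}$), $T=\min\{i:X_i=0\}$. $\mathbf{1}$ is the all-ones column vector of the appropriate dimension. $Q$ is in Frobenius normal form: block lower triangular with blocks $Q_{ij}\in\mathbb{R}^{d_i\times d_j}$, $i,j\in\{1,\dots,k\}$, $\sum_i d_i=d$, $Q_{ij}=0$ for $j>i$, each diagonal block $Q_{ii}$ eventually positive. $I_j=\{1+\sum_{i=1}^{j-1}d_i,\dots,\sum_{i=1}^{j}d_i\}$, and $\pi=(\pi_1,\dots,\pi_k)$ with $\pi_i\in\mathbb{R}^{1\times d_i}$. An admissible path of length $\kappa=\kappa(\theta)$ is a strictly decreasing sequence $\theta=(\theta_1,\dots,\theta_\kappa)$ in $\{1,\dots,k\}$ with $Q_{\theta_u\theta_{u+1}}\neq 0$ for all $u\in\{1,\dots,\kappa-1\}$; $\mathcal{P}$ is the set of all admissible paths, $\mathcal{P}_{ij}$ those with $\theta_1=i,\theta_\kappa=j$, and $\mathcal{P}^{(\ell)}$ those with $\theta_u=\ell$ for some $u$. For $\kappa\in\mathbb{N}$, $m\in\mathbb{Z}$,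 $\Gamma_\kappa(m)=\{(\eta_1,\dots,\eta_\kappa)\in\mathbb{N}_0^\kappa:\eta_1+\dots+\eta_\kappa=m\}$ (empty if $m<0$). For $\theta\in\mathcal{P}$ and $m\in\mathbb{N}$, $Q(\theta,m)=\sum_{\eta\in\Gamma_\kappa(m+1-\kappa)}Q_{\theta_1\theta_1}^{\eta_1}Q_{\theta_1\theta_2}Q_{\theta_2\theta_2}^{\eta_2}Q_{\theta_2\theta_3}\cdots Q_{\theta_{\kappa-1}\theta_\kappa}Q_{\theta_\kappa\theta_\kappa}^{\eta_\kappa}$, and $Q(\theta,0)=\mathrm{Id}$ if $\theta_1=\theta_\kappa$ (i.e. $\kappa=1$) and $Q(\theta,0)=0$ otherwise. For $\theta\in\mathcal{P}^{(\ell)}$ with $\theta_u=\ell$, $\underline{\theta^\ell}=(\theta_1,\dots,\theta_u)$ and $\overline{\theta^\ell}=(\theta_u,\dots,\theta_\kappa)$. *)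

theory Defs
  imports "HOL-Analysis.Analysis"
begin

text \<open>Matrices are functions nat => nat => real, states of the chain are 0..d,
  the transient states are 1..d (1-based, as in the paper).  Blocks of Q are
  represented embedded in the d x d index range (zero outside I_i x I_j).\<close>

type_synonym rmat = "nat \<Rightarrow> nat \<Rightarrow> real"

definition mmul :: "nat \<Rightarrow> rmat \<Rightarrow> rmat \<Rightarrow> rmat" where
  "mmul d A B = (\<lambda>i j. \<Sum>l\<in>{1..d}. A i l * B l j)"

definition zmat :: rmat where "zmat = (\<lambda>i j. 0)"

definition Iset :: "nat list \<Rightarrow> nat \<Rightarrow> nat set" where
  "Iset ds j = {1 + (\<Sum>i<j-1. ds!i) .. (\<Sum>i<j. ds!i)}"

definition blk :: "rmat \<Rightarrow> nat list \<Rightarrow> nat \<Rightarrow> nat \<Rightarrow> rmat" where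
  "blk P ds i j = (\<lambda>s t. if s \<in> Iset ds i \<and> t \<in> Iset ds j then P s t else 0)"

definition blkId :: "nat list \<Rightarrow> nat \<Rightarrow> rmat" where
  "blkId ds i = (\<lambda>s t. if s \<in> Iset ds i \<and> s = t then 1 else 0)"

fun bpow :: "nat \<Rightarrow> rmat \<Rightarrow> nat list \<Rightarrow> nat \<Rightarrow> nat \<Rightarrow> rmat" where
  "bpow d P ds i 0 = blkId ds i"
| "bpow d P ds i (Suc e) = mmul d (blk P ds i i) (bpow d P ds i e)"

definition admissible :: "rmat \<Rightarrow> nat list \<Rightarrow> nat list \<Rightarrow> bool" where
  "admissible P ds \<theta> \<longleftrightarrow> \<theta> \<noteq> [] \<and> set \<theta> \<subseteq> {1..length ds} \<and> sorted_wrt (>) \<theta> \<and>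
     (\<forall>u. Suc u < length \<theta> \<longrightarrow> blk P ds (\<theta>!u) (\<theta>!Suc u) \<noteq> zmat)"

definition Paths :: "rmat \<Rightarrow> nat list \<Rightarrow> nat list set" where
  "Paths P ds = {\<theta>. admissible P ds \<theta>}"

definition Paths_through :: "rmat \<Rightarrow> nat list \<Rightarrow> nat \<Rightarrow> nat list set" where
  "Paths_through P ds l = {\<theta>\<in>Paths P ds. l \<in> set \<theta>}"

definition Gam :: "nat \<Rightarrow> int \<Rightarrow> nat list set" where
  "Gam \<kappa> m = (if m < 0 then {} else {\<eta>. length \<eta> = \<kappa> \<and> sum_list \<eta> = nat m})"

fun pathprod :: "nat \<Rightarrow> rmat \<Rightarrow> nat list \<Rightarrow> nat list \<Rightarrow> nat list \<Rightarrow> rmat" where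
  "pathprod d P ds [a] [e] = bpow d P ds a e"
| "pathprod d P ds (a # b # \<theta>) (e # \<eta>) =
     mmul d (mmul d (bpow d P ds a e) (blk P ds a b)) (pathprod d P ds (b # \<theta>) \<eta>)"
| "pathprod d P ds _ _ = zmat"

definition Qpath :: "nat \<Rightarrow> rmat \<Rightarrow> nat list \<Rightarrow> nat list \<Rightarrow> nat \<Rightarrow> rmat" where
  "Qpath d P ds \<theta> m =
     (if m = 0 then (if length \<theta> = 1 then blkId ds (hd \<theta>) else zmat)
      else (\<lambda>s t. \<Sum>\<eta>\<in>Gam (length \<theta>) (int m + 1 - int (length \<theta>)).
                          pathprod d P ds \<theta> \<eta> s t))"

definition lowpart :: "nat list \<Rightarrow> nat \<Rightarrow> nat list" where
  "lowpart \<theta> l = takeWhile (\<lambda>x. x \<noteq> l) \<theta> @ [l]"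

definition uppart :: "nat list \<Rightarrow> nat \<Rightarrow> nat list" where
  "uppart \<theta> l = dropWhile (\<lambda>x. x \<noteq> l) \<theta>"

text \<open>Law of the chain (X_0,...,X_n) on {0..d}: initial distribution pi (on 1..d,
  extended by 0 at the absorbing state 0), transition matrix P.\<close>
definition pathprob :: "rmat \<Rightarrow> (nat \<Rightarrow> real) \<Rightarrow> nat list \<Rightarrow> real" where
  "pathprob P \<pi> xs = (if xs ! 0 = 0 then 0 else \<pi> (xs ! 0)) *
                      (\<Prod>i<length xs - 1. P (xs ! i) (xs ! Suc i))"

definition trajectories :: "nat \<Rightarrow> nat \<Rightarrow> nat list set" where
  "trajectories d n = {xs. length xs = Suc n \<and> set xs \<subseteq> {0..d}}"

text \<open>T > n  iff  X_0,...,X_n are all nonzero (T = first hitting time of 0).\<close>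
definition Tgt :: "nat \<Rightarrow> nat list \<Rightarrow> bool" where
  "Tgt n xs \<longleftrightarrow> (\<forall>m\<le>n. xs ! m \<noteq> 0)"

definition cond_exp :: "nat \<Rightarrow> rmat \<Rightarrow> (nat \<Rightarrow> real) \<Rightarrow> nat \<Rightarrow> (nat list \<Rightarrow> real) \<Rightarrow> real" where
  "cond_exp d P \<pi> n Y =
     (\<Sum>xs\<in>{xs\<in>trajectories d n. Tgt n xs}. pathprob P \<pi> xs * Y xs) /
     (\<Sum>xs\<in>{xs\<in>trajectories d n. Tgt n xs}. pathprob P \<pi> xs)"

end

theory Submission
  imports Defs
begin

text \<open>The identity holds numerator by numerator and denominator by denominator.  On the
  survival event T > n the law of the chain is a product of entries of Q, so
  P(T > n) = \<pi> Q^n 1 and the expected number of visits to a set S up to time n is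
  \<Sum>_r \<pi> Q^r diag(1_S) Q^(n-r) 1.  Since Q is block lower triangular, expanding Q^m block by
  block gives Q^m = \<Sum>_\<theta> Q(\<theta>, m) over all admissible paths (induction on m, splitting off
  the first step).  A path through block l is uniquely glued from a path ending in l and
  one starting in l, so summing Q(\<theta> up to l, r) E Q(\<theta> from l, n - r) over these paths
  gives Q^r E Q^(n-r) for every E supported on I_l \<times> I_l.\<close>

section \<open>Blocks and block-supported matrices\<close>

definition block_end :: "nat list \<Rightarrow> nat \<Rightarrow> nat" where
  "block_end ds j = (\<Sum>i<j. ds ! i)"

lemma Iset_eq: "Iset ds j = {1 + block_end ds (j - 1) .. block_end ds j}"
  by (simp add: Iset_def block_end_def)

lemma block_end_mono: "i \<le> j \<Longrightarrow> block_end ds i \<le> block_end ds j"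
  unfolding block_end_def by (rule sum_mono2) auto

lemma block_end_length: "block_end ds (length ds) = sum_list ds"
  by (simp add: block_end_def sum_list_sum_nth atLeast0LessThan)

lemma Iset_subset: "j \<le> length ds \<Longrightarrow> Iset ds j \<subseteq> {1..sum_list ds}"
  using block_end_mono[of j "length ds" ds] by (auto simp: Iset_eq block_end_length)

lemma Iset_unique: "x \<in> Iset ds i \<Longrightarrow> x \<in> Iset ds j \<Longrightarrow> i = j"
proof -
  have "i < j \<Longrightarrow> x \<in> Iset ds i \<Longrightarrow> x \<in> Iset ds j \<Longrightarrow> False" for i j
    using block_end_mono[of i "j - 1" ds] by (auto simp: Iset_eq) linarith
  then show "x \<in> Iset ds i \<Longrightarrow> x \<in> Iset ds j \<Longrightarrow> i = j"
    by (metis linorder_neqE_nat)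
qed

lemma Iset_cover:
  assumes "u \<in> {1..sum_list ds}"
  obtains j where "j \<in> {1..length ds}" "u \<in> Iset ds j"
proof -
  define j where "j = (LEAST j. u \<le> block_end ds j)"
  have ex: "u \<le> block_end ds (length ds)"
    using assms by (simp add: block_end_length)
  have "u \<le> block_end ds j"
    unfolding j_def by (rule LeastI[of _ "length ds"]) (rule ex)
  moreover have "j \<le> length ds"
    unfolding j_def by (rule Least_le) (rule ex)
  moreover have "j \<noteq> 0"
    using \<open>u \<le> block_end ds j\<close> assms by (auto simp: block_end_def intro!: Nat.gr0I)
  moreover from this have "\<not> u \<le> block_end ds (j - 1)"
    unfolding j_def by (intro not_less_Least) (simp add: j_def)
  ultimately show ?thesis
    by (intro that[of j]) (auto simp: Iset_eq)
qed

lemma mmul_assoc: "mmul d (mmul d A B) C = mmul d A (mmul d B C)"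
  unfolding mmul_def sum_distrib_left sum_distrib_right
  by (intro ext, subst sum.swap) (simp add: mult.assoc)

lemma mmul_zmat [simp]: "mmul d A zmat = zmat" "mmul d zmat A = zmat"
  by (auto simp: mmul_def zmat_def fun_eq_iff)

lemma mmul_sum_right:
  "finite X \<Longrightarrow> mmul d A (\<lambda>s t. \<Sum>x\<in>X. F x s t) s t = (\<Sum>x\<in>X. mmul d A (F x) s t)"
  unfolding mmul_def sum_distrib_left by (rule sum.swap)

lemma mmul_nonzero_obtain:
  assumes "mmul d A B s t \<noteq> 0"
  obtains u where "A s u \<noteq> 0" "B u t \<noteq> 0"
  using assms unfolding mmul_def by (metis (no_types, lifting) mult_not_zero sum.neutral)

text \<open>mmul sums over the transient states 1..d only, so on those states mat_pow d P m
  is Q^m; the absorbing state 0 never enters.\<close>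
fun mat_pow :: "nat \<Rightarrow> rmat \<Rightarrow> nat \<Rightarrow> rmat" where
  "mat_pow d A 0 = (\<lambda>i j. if i = j then 1 else 0)"
| "mat_pow d A (Suc m) = mmul d A (mat_pow d A m)"

definition block_supported :: "nat list \<Rightarrow> rmat \<Rightarrow> nat \<Rightarrow> nat \<Rightarrow> bool" where
  "block_supported ds A a b \<longleftrightarrow> (\<forall>s t. A s t \<noteq> 0 \<longrightarrow> s \<in> Iset ds a \<and> t \<in> Iset ds b)"

lemma block_supported_mmul:
  "block_supported ds A a b \<Longrightarrow> block_supported ds B b' c \<Longrightarrow> block_supported ds (mmul d A B) a c"
  unfolding block_supported_def by (metis mmul_nonzero_obtain)

lemma block_supported_zmat: "block_supported ds zmat a b"
  by (simp add: block_supported_def zmat_def)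

lemma block_supported_blk: "block_supported ds (blk P ds a b) a b"
  by (simp add: block_supported_def blk_def)

lemma block_supported_blkId: "block_supported ds (blkId ds a) a a"
  by (simp add: block_supported_def blkId_def)

lemma block_supported_bpow: "block_supported ds (bpow d P ds a e) a a"
  by (induction e) (auto simp: block_supported_blkId intro: block_supported_mmul block_supported_blk)

lemma block_supported_pathprod:
  "\<theta> \<noteq> [] \<Longrightarrow> block_supported ds (pathprod d P ds \<theta> \<eta>) (hd \<theta>) (last \<theta>)"
  by (induction d P ds \<theta> \<eta> rule: pathprod.induct)
     (auto simp: block_supported_zmat block_supported_bpow
           intro!: block_supported_mmul[OF block_supported_mmul[OF block_supported_bpow block_supported_blk]])

lemma mmul_blkId_left:
  assumes "a \<le> length ds" "sum_list ds = d"
  shows "mmul d (blkId ds a) B s t = (if s \<in> Iset ds a then B s t else 0)"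
proof -
  have "Iset ds a \<subseteq> {1..d}" using Iset_subset assms by blast
  then show ?thesis
    unfolding mmul_def blkId_def by (auto simp: if_distrib[of "\<lambda>x. x * _"] cong: if_cong)
qed

lemma mmul_unit_mat:
  "mmul d (mmul d A (\<lambda>i j. if i = s0 \<and> j = s0 then 1 else 0)) B s t
   = (\<Sum>u\<in>{1..d}. A s u * of_bool (u = s0) * B u t)"
proof -
  have "mmul d A (\<lambda>i j. if i = s0 \<and> j = s0 then 1 else 0) s u = A s u * of_bool (u = s0)"
    if "u \<in> {1..d}" for u
    using that unfolding mmul_def by (auto simp: if_distrib[of "\<lambda>x. _ * x"] cong: if_cong)
  then show ?thesis
    unfolding mmul_def[of d _ B] by (intro sum.cong) auto
qed

lemma mmul_blk_other: "s \<in> Iset ds i \<Longrightarrow> a \<noteq> i \<Longrightarrow> mmul d (blk P ds a b) B s t = 0"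
  unfolding mmul_def blk_def by (auto intro!: sum.neutral dest: Iset_unique)

section \<open>Admissible paths and the path matrices Q(\<theta>, m)\<close>

lemma admissible_simps [simp]:
  "\<not> admissible P ds []"
  "admissible P ds [a] \<longleftrightarrow> a \<in> {1..length ds}"
  "admissible P ds (a # b # \<theta>) \<longleftrightarrow>
     a \<in> {1..length ds} \<and> b < a \<and> blk P ds a b \<noteq> zmat \<and> admissible P ds (b # \<theta>)"
proof -
  have all_Suc: "(\<forall>u. Q u) \<longleftrightarrow> Q 0 \<and> (\<forall>u. Q (Suc u))" for Q :: "nat \<Rightarrow> bool"
    by (metis not0_implies_Suc)
  show "\<not> admissible P ds []" "admissible P ds [a] \<longleftrightarrow> a \<in> {1..length ds}"
    by (auto simp: admissible_def)
  show "admissible P ds (a # b # \<theta>) \<longleftrightarrow>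
     a \<in> {1..length ds} \<and> b < a \<and> blk P ds a b \<noteq> zmat \<and> admissible P ds (b # \<theta>)"
    unfolding admissible_def by (subst all_Suc) auto
qed

lemma Paths_nonempty: "\<theta> \<in> Paths P ds \<Longrightarrow> \<theta> \<noteq> []"
  by (auto simp: Paths_def)

lemma admissible_set: "admissible P ds \<theta> \<Longrightarrow> set \<theta> \<subseteq> {1..length ds}"
  by (simp add: admissible_def)

lemma admissible_distinct: "admissible P ds \<theta> \<Longrightarrow> distinct \<theta>"
proof -
  have "sorted_wrt (>) xs \<Longrightarrow> distinct xs" for xs :: "nat list"
    by (induction xs) auto
  then show "admissible P ds \<theta> \<Longrightarrow> distinct \<theta>"
    by (simp add: admissible_def)
qed

lemma admissible_hd_last:
  assumes "admissible P ds \<theta>"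
  shows "hd \<theta> \<in> {1..length ds}" "last \<theta> \<in> {1..length ds}"
proof -
  have "\<theta> \<noteq> []" using assms by (auto simp: admissible_def)
  then show "hd \<theta> \<in> {1..length ds}" "last \<theta> \<in> {1..length ds}"
    using admissible_set[OF assms] hd_in_set last_in_set by blast+
qed

lemma admissible_append_iff:
  "admissible P ds (xs @ l # ys) \<longleftrightarrow> admissible P ds (xs @ [l]) \<and> admissible P ds (l # ys)"
proof (induction xs rule: induct_list012)
  case 1
  then show ?case by (cases ys) auto
next
  case (2 x)
  then show ?case by (cases ys) auto
next
  case (3 x y zs)
  then show ?case by auto
qed

lemma Paths_tl_bij:
  assumes i: "i \<in> {1..length ds}"
  shows "bij_betw tl {\<theta>\<in>Paths P ds. hd \<theta> = i \<and> 2 \<le> length \<theta>}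
                    {\<theta>\<in>Paths P ds. hd \<theta> < i \<and> blk P ds i (hd \<theta>) \<noteq> zmat}"
    (is "bij_betw tl ?D ?C")
proof (rule bij_betw_byWitness[where f'="Cons i"])
  have D_cases: "i # tl \<theta> = \<theta> \<and> tl \<theta> \<in> ?C" if D: "\<theta> \<in> ?D" for \<theta>
  proof -
    obtain b r where "\<theta> = i # b # r" "admissible P ds \<theta>"
      using D by (cases \<theta> rule: remdups_adj.cases) (auto simp: Paths_def)
    then show ?thesis by (simp add: Paths_def)
  qed
  then show "\<forall>\<theta>\<in>?D. i # tl \<theta> = \<theta>" "tl ` ?D \<subseteq> ?C"
    by blast+
  show "\<forall>\<theta>\<in>?C. tl (i # \<theta>) = \<theta>" by simp
  have "i # \<theta> \<in> ?D" if "\<theta> \<in> ?C" for \<theta>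
    using that i by (cases \<theta>) (auto simp: Paths_def)
  then show "Cons i ` ?C \<subseteq> ?D" by blast
qed

lemma finite_Paths: "finite (Paths P ds)"
proof (rule finite_subset)
  show "Paths P ds \<subseteq> {xs. set xs \<subseteq> {1..length ds} \<and> distinct xs}"
    using admissible_set admissible_distinct by (fastforce simp: Paths_def)
qed (simp add: finite_subset_distinct)

lemma mem_Gam: "\<eta> \<in> Gam \<kappa> N \<longleftrightarrow> N \<ge> 0 \<and> length \<eta> = \<kappa> \<and> sum_list \<eta> = nat N"
  by (auto simp: Gam_def)

lemma finite_Gam: "finite (Gam \<kappa> N)"
proof (rule finite_subset)
  show "Gam \<kappa> N \<subseteq> {xs. set xs \<subseteq> {0..nat N} \<and> length xs = \<kappa>}"
    by (auto simp: mem_Gam dest: member_le_sum_list)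
qed (simp add: finite_lists_length_eq)

lemma Qpath_eq_sum:
  assumes "\<theta> \<noteq> []"
  shows "Qpath d P ds \<theta> m =
    (\<lambda>s t. \<Sum>\<eta>\<in>Gam (length \<theta>) (int m + 1 - int (length \<theta>)). pathprod d P ds \<theta> \<eta> s t)"
proof (cases "m = 0 \<and> length \<theta> = 1")
  case True
  then obtain a where "\<theta> = [a]" by (auto simp: length_Suc_conv)
  moreover have "Gam 1 0 = {[0]}" by (auto simp: mem_Gam length_Suc_conv)
  ultimately show ?thesis using True by (simp add: Qpath_def)
next
  case False
  moreover have "length \<theta> \<noteq> 1 \<Longrightarrow> Gam (length \<theta>) (1 - int (length \<theta>)) = {}"
    using assms by (cases \<theta>) (auto simp: Gam_def)
  ultimately show ?thesis by (auto simp: Qpath_def zmat_def)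
qed

lemma Qpath_single: "Qpath d P ds [a] m = bpow d P ds a m"
proof -
  have "Gam 1 (int m) = {[m]}" by (auto simp: mem_Gam length_Suc_conv)
  then show ?thesis by (simp add: Qpath_eq_sum)
qed

lemma block_supported_Qpath:
  assumes "\<theta> \<noteq> []"
  shows "block_supported ds (Qpath d P ds \<theta> m) (hd \<theta>) (last \<theta>)"
  unfolding block_supported_def Qpath_eq_sum[OF assms]
  by (metis (mono_tags, lifting) block_supported_def block_supported_pathprod[OF assms] sum.neutral)

lemma Qpath_nonzero_blocks:
  assumes "\<theta> \<in> Paths P ds" "Qpath d P ds \<theta> m s t \<noteq> 0"
  shows "s \<in> Iset ds (hd \<theta>)" "t \<in> Iset ds (last \<theta>)"
  using block_supported_Qpath[OF Paths_nonempty[OF assms(1)]] assms(2)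
  by (auto simp: block_supported_def)

lemma Qpath_col_outside:
  "\<theta> \<in> Paths P ds \<Longrightarrow> t \<in> Iset ds l \<Longrightarrow> last \<theta> \<noteq> l \<Longrightarrow> Qpath d P ds \<theta> m s t = 0"
  using Qpath_nonzero_blocks(2) Iset_unique by metis

lemma Qpath_row_outside:
  "\<theta> \<in> Paths P ds \<Longrightarrow> s \<in> Iset ds l \<Longrightarrow> hd \<theta> \<noteq> l \<Longrightarrow> Qpath d P ds \<theta> m s t = 0"
  using Qpath_nonzero_blocks(1) Iset_unique by metis

text \<open>The first exponent is either 0 (the path leaves block a at once) or positive
  (one more factor Q_aa).\<close>
lemma Qpath_Cons_Cons_Suc:
  assumes a: "a \<le> length ds" and ds: "sum_list ds = d"
  shows "Qpath d P ds (a # b # \<theta>) (Suc m) s t =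
    mmul d (blk P ds a a) (Qpath d P ds (a # b # \<theta>) m) s t
    + mmul d (blk P ds a b) (Qpath d P ds (b # \<theta>) m) s t"
proof -
  have blkId_blk: "mmul d (blkId ds a) (blk P ds a b) = blk P ds a b"
    using mmul_blkId_left[OF a ds] by (auto simp: blk_def fun_eq_iff)
  define K where "K = Suc (length \<theta>)"
  define N where "N = int (Suc m) + 1 - int (Suc K)"
  define f where "f \<eta> = pathprod d P ds (a # b # \<theta>) \<eta> s t" for \<eta>
  have "Qpath d P ds (a # b # \<theta>) (Suc m) s t = sum f (Gam (Suc K) N)"
    by (simp add: Qpath_eq_sum f_def K_def N_def)
  also have "\<dots> = sum f (Gam (Suc K) N \<inter> {\<eta>. hd \<eta> = 0}) + sum f (Gam (Suc K) N - {\<eta>. hd \<eta> = 0})"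
    by (rule sum.Int_Diff) (rule finite_Gam)
  also have "sum f (Gam (Suc K) N \<inter> {\<eta>. hd \<eta> = 0}) = (\<Sum>\<eta>\<in>Gam K N. f (0 # \<eta>))"
    by (rule sum.reindex_bij_witness[where i="Cons 0" and j=tl]) (auto simp: mem_Gam length_Suc_conv)
  also have "\<dots> = mmul d (blk P ds a b) (Qpath d P ds (b # \<theta>) m) s t"
    by (simp add: f_def blkId_blk Qpath_eq_sum mmul_sum_right[OF finite_Gam] K_def N_def)
  also have "sum f (Gam (Suc K) N - {\<eta>. hd \<eta> = 0}) = (\<Sum>\<eta>\<in>Gam (Suc K) (N - 1). f (Suc (hd \<eta>) # tl \<eta>))"
    by (rule sum.reindex_bij_witness[where i="\<lambda>\<eta>. Suc (hd \<eta>) # tl \<eta>" and j="\<lambda>\<eta>. (hd \<eta> - 1) # tl \<eta>"])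
       (auto simp: mem_Gam length_Suc_conv)
  also have "\<dots> = mmul d (blk P ds a a) (Qpath d P ds (a # b # \<theta>) m) s t"
    unfolding Qpath_eq_sum[OF list.simps(3)] mmul_sum_right[OF finite_Gam]
    by (intro sum.cong) (auto simp: f_def mmul_assoc mem_Gam length_Suc_conv K_def N_def)
  finally show ?thesis by simp
qed

section \<open>Paths through a block\<close>

lemma lowpart_append: "l \<notin> set xs \<Longrightarrow> lowpart (xs @ l # ys) l = xs @ [l]"
  unfolding lowpart_def by (induction xs) auto

lemma uppart_append: "l \<notin> set xs \<Longrightarrow> uppart (xs @ l # ys) l = l # ys"
  unfolding uppart_def by (induction xs) auto

lemma Paths_through_split:
  assumes "\<theta> \<in> Paths_through P ds l"
  obtains xs ys where "\<theta> = xs @ l # ys" "l \<notin> set xs"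
    "lowpart \<theta> l = xs @ [l]" "uppart \<theta> l = l # ys"
    "lowpart \<theta> l \<in> Paths P ds" "uppart \<theta> l \<in> Paths P ds"
proof -
  have "admissible P ds \<theta>" "l \<in> set \<theta>"
    using assms by (auto simp: Paths_through_def Paths_def)
  moreover obtain xs ys where "\<theta> = xs @ l # ys" "l \<notin> set xs"
    using split_list_first[OF \<open>l \<in> set \<theta>\<close>] by blast
  ultimately show ?thesis
    using that admissible_append_iff[of P ds xs l ys]
    by (simp add: lowpart_append uppart_append Paths_def)
qed

lemma Paths_through_parts:
  assumes "\<theta> \<in> Paths_through P ds l"
  shows "lowpart \<theta> l \<in> Paths P ds" "uppart \<theta> l \<in> Paths P ds"
    "hd (lowpart \<theta> l) = hd \<theta>" "last (lowpart \<theta> l) = l"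
    "hd (uppart \<theta> l) = l" "last (uppart \<theta> l) = last \<theta>"
proof -
  obtain xs ys where "\<theta> = xs @ l # ys" "lowpart \<theta> l = xs @ [l]" "uppart \<theta> l = l # ys"
    "lowpart \<theta> l \<in> Paths P ds" "uppart \<theta> l \<in> Paths P ds"
    using Paths_through_split[OF assms] by metis
  then show "lowpart \<theta> l \<in> Paths P ds" "uppart \<theta> l \<in> Paths P ds"
    "hd (lowpart \<theta> l) = hd \<theta>" "last (lowpart \<theta> l) = l"
    "hd (uppart \<theta> l) = l" "last (uppart \<theta> l) = last \<theta>"
    by (cases xs; simp)+
qed

lemma Paths_through_bij:
  "bij_betw (\<lambda>\<theta>. (lowpart \<theta> l, uppart \<theta> l)) (Paths_through P ds l)
     ({\<alpha>\<in>Paths P ds. last \<alpha> = l} \<times> {\<beta>\<in>Paths P ds. hd \<beta> = l})"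
proof (rule bij_betw_byWitness[where f'="\<lambda>(\<alpha>, \<beta>). butlast \<alpha> @ \<beta>"])
  show "\<forall>\<theta>\<in>Paths_through P ds l. (\<lambda>(\<alpha>, \<beta>). butlast \<alpha> @ \<beta>) (lowpart \<theta> l, uppart \<theta> l) = \<theta>"
    "(\<lambda>\<theta>. (lowpart \<theta> l, uppart \<theta> l)) ` Paths_through P ds l
       \<subseteq> {\<alpha>\<in>Paths P ds. last \<alpha> = l} \<times> {\<beta>\<in>Paths P ds. hd \<beta> = l}"
    by (auto elim!: Paths_through_split)
  have glue: "lowpart (xs @ l # ys) l = xs @ [l] \<and> uppart (xs @ l # ys) l = l # ys \<and>
      xs @ l # ys \<in> Paths_through P ds l"
    if "xs @ [l] \<in> Paths P ds" "l # ys \<in> Paths P ds" for xs ys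
  proof -
    have "l \<notin> set xs"
      using admissible_distinct that(1) by (fastforce simp: Paths_def)
    then show ?thesis
      using that admissible_append_iff[of P ds xs l ys]
      by (simp add: lowpart_append uppart_append Paths_def Paths_through_def)
  qed
  have "(lowpart (butlast \<alpha> @ \<beta>) l, uppart (butlast \<alpha> @ \<beta>) l) = (\<alpha>, \<beta>) \<and>
      butlast \<alpha> @ \<beta> \<in> Paths_through P ds l"
    if \<alpha>: "\<alpha> \<in> Paths P ds" "last \<alpha> = l" and \<beta>: "\<beta> \<in> Paths P ds" "hd \<beta> = l" for \<alpha> \<beta>
  proof -
    obtain xs where xs: "\<alpha> = xs @ [l]"
      using \<alpha> Paths_nonempty by (metis append_butlast_last_id)
    obtain ys where ys: "\<beta> = l # ys"
      using \<beta> Paths_nonempty by (metis list.collapse)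
    show ?thesis
      using glue[of xs ys] \<alpha> \<beta> by (simp add: xs ys)
  qed
  then show "\<forall>p\<in>{\<alpha>\<in>Paths P ds. last \<alpha> = l} \<times> {\<beta>\<in>Paths P ds. hd \<beta> = l}.
      (\<lambda>\<theta>. (lowpart \<theta> l, uppart \<theta> l)) ((\<lambda>(\<alpha>, \<beta>). butlast \<alpha> @ \<beta>) p) = p"
    "(\<lambda>(\<alpha>, \<beta>). butlast \<alpha> @ \<beta>) ` ({\<alpha>\<in>Paths P ds. last \<alpha> = l} \<times> {\<beta>\<in>Paths P ds. hd \<beta> = l})
       \<subseteq> Paths_through P ds l"
    by auto
qed

section \<open>The absorbed chain on the survival event\<close>

definition chain_weight :: "rmat \<Rightarrow> nat list \<Rightarrow> real" where
  "chain_weight P xs = (\<Prod>i<length xs - 1. P (xs ! i) (xs ! Suc i))"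

lemma chain_weight_single [simp]: "chain_weight P [x] = 1"
  by (simp add: chain_weight_def)

lemma chain_weight_Cons_Cons [simp]: "chain_weight P (x # y # ys) = P x y * chain_weight P (y # ys)"
  unfolding chain_weight_def by (simp only: length_Cons diff_Suc_1, subst prod.lessThan_Suc_shift) simp

lemma pathprob_Cons: "x \<noteq> 0 \<Longrightarrow> pathprob P \<pi> (x # ys) = \<pi> x * chain_weight P (x # ys)"
  by (simp add: pathprob_def chain_weight_def)

abbreviation state_lists :: "nat \<Rightarrow> nat \<Rightarrow> nat list set" where
  "state_lists d n \<equiv> {xs. length xs = n \<and> set xs \<subseteq> {1..d}}"

lemma survival_trajectories: "{xs \<in> trajectories d n. Tgt n xs} = state_lists d (Suc n)"
proof (intro set_eqI iffI)
  fix xs assume "xs \<in> {xs \<in> trajectories d n. Tgt n xs}"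
  then have xs: "length xs = Suc n" "set xs \<subseteq> {0..d}" "\<forall>m\<le>n. xs ! m \<noteq> 0"
    by (auto simp: trajectories_def Tgt_def)
  have "x \<noteq> 0" if "x \<in> set xs" for x
    using that xs(1,3) by (auto simp: in_set_conv_nth less_Suc_eq_le)
  with xs(1,2) show "xs \<in> state_lists d (Suc n)" by fastforce
next
  fix xs assume xs: "xs \<in> state_lists d (Suc n)"
  then have "xs ! m \<noteq> 0" if "m \<le> n" for m
    using that nth_mem[of m xs] by fastforce
  with xs show "xs \<in> {xs \<in> trajectories d n. Tgt n xs}"
    by (auto simp: trajectories_def Tgt_def)
qed

lemma sum_state_lists_Suc:
  "(\<Sum>xs\<in>state_lists d (Suc n). f xs) = (\<Sum>x\<in>{1..d}. \<Sum>ys\<in>state_lists d n. f (x # ys))"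
proof -
  have "(\<Sum>xs\<in>state_lists d (Suc n). f xs) = (\<Sum>(x, ys)\<in>{1..d} \<times> state_lists d n. f (x # ys))"
    by (rule sum.reindex_bij_witness[where i="\<lambda>(x, ys). x # ys" and j="\<lambda>xs. (hd xs, tl xs)"])
       (auto simp: length_Suc_conv)
  then show ?thesis by (simp add: sum.cartesian_product)
qed

lemma sum_chain_weight:
  "x \<in> {1..d} \<Longrightarrow> (\<Sum>ys\<in>state_lists d n. chain_weight P (x # ys)) = (\<Sum>t\<in>{1..d}. mat_pow d P n x t)"
proof (induction n arbitrary: x)
  case 0
  have "state_lists d 0 = {[]}" by auto
  then show ?case using 0 by simp
next
  case (Suc n)
  have "(\<Sum>ys\<in>state_lists d (Suc n). chain_weight P (x # ys))
      = (\<Sum>y\<in>{1..d}. P x y * (\<Sum>ys\<in>state_lists d n. chain_weight P (y # ys)))"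
    unfolding sum_state_lists_Suc by (simp add: sum_distrib_left)
  also have "\<dots> = (\<Sum>y\<in>{1..d}. P x y * (\<Sum>t\<in>{1..d}. mat_pow d P n y t))"
    using Suc.IH by simp
  also have "\<dots> = (\<Sum>t\<in>{1..d}. \<Sum>y\<in>{1..d}. P x y * mat_pow d P n y t)"
    by (simp add: sum_distrib_left sum.swap[of "\<lambda>y t. P x y * mat_pow d P n y t"])
  also have "\<dots> = (\<Sum>t\<in>{1..d}. mat_pow d P (Suc n) x t)"
    by (simp add: mmul_def)
  finally show ?case .
qed

lemma sum_chain_weight_nth:
  "x \<in> {1..d} \<Longrightarrow> m \<le> n \<Longrightarrow>
   (\<Sum>ys\<in>state_lists d n. chain_weight P (x # ys) * g ((x # ys) ! m))
   = (\<Sum>u\<in>{1..d}. mat_pow d P m x u * g u * (\<Sum>t\<in>{1..d}. mat_pow d P (n - m) u t))"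
proof (induction m arbitrary: n x)
  case 0
  have "(\<Sum>u\<in>{1..d}. mat_pow d P 0 x u * g u * (\<Sum>t\<in>{1..d}. mat_pow d P n u t))
      = g x * (\<Sum>t\<in>{1..d}. mat_pow d P n x t)"
    using 0 by (simp add: if_distrib[of "\<lambda>a. a * _"] cong: if_cong)
  moreover have "(\<Sum>ys\<in>state_lists d n. chain_weight P (x # ys) * g ((x # ys) ! 0))
      = (\<Sum>ys\<in>state_lists d n. chain_weight P (x # ys)) * g x"
    by (simp add: sum_distrib_right)
  ultimately show ?case
    using sum_chain_weight[OF 0(1)] by (simp add: mult.commute)
next
  case (Suc m)
  then obtain n' where n: "n = Suc n'" "m \<le> n'" by (cases n) auto
  define S where "S u = (\<Sum>t\<in>{1..d}. mat_pow d P (n' - m) u t)" for u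
  have "(\<Sum>ys\<in>state_lists d n. chain_weight P (x # ys) * g ((x # ys) ! Suc m))
      = (\<Sum>y\<in>{1..d}. P x y * (\<Sum>ys\<in>state_lists d n'. chain_weight P (y # ys) * g ((y # ys) ! m)))"
    unfolding n(1) sum_state_lists_Suc by (simp add: sum_distrib_left mult.assoc)
  also have "\<dots> = (\<Sum>y\<in>{1..d}. P x y * (\<Sum>u\<in>{1..d}. mat_pow d P m y u * g u * S u))"
    using Suc.IH n(2) by (simp add: S_def)
  also have "\<dots> = (\<Sum>y\<in>{1..d}. \<Sum>u\<in>{1..d}. P x y * (mat_pow d P m y u * (g u * S u)))"
    by (simp add: sum_distrib_left mult.assoc)
  also have "\<dots> = (\<Sum>u\<in>{1..d}. \<Sum>y\<in>{1..d}. P x y * (mat_pow d P m y u * (g u * S u)))"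
    by (rule sum.swap)
  also have "\<dots> = (\<Sum>u\<in>{1..d}. (\<Sum>y\<in>{1..d}. P x y * mat_pow d P m y u) * (g u * S u))"
    by (simp add: sum_distrib_right mult.assoc)
  also have "\<dots> = (\<Sum>u\<in>{1..d}. mat_pow d P (Suc m) x u * g u * (\<Sum>t\<in>{1..d}. mat_pow d P (n - Suc m) u t))"
    by (simp add: n(1) S_def mmul_def mult.assoc)
  finally show ?case .
qed

text \<open>survival_mass is \<pi> Q^n 1 = P_\<pi>(T > n), and survival_occupation g is
  \<Sum>_r \<pi> Q^r diag(g) Q^(n-r) 1 = E_\<pi>[g(X_0) + ... + g(X_n); T > n].\<close>
definition survival_mass :: "nat \<Rightarrow> rmat \<Rightarrow> (nat \<Rightarrow> real) \<Rightarrow> nat \<Rightarrow> real" where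
  "survival_mass d P \<pi> n = (\<Sum>x\<in>{1..d}. \<pi> x * (\<Sum>t\<in>{1..d}. mat_pow d P n x t))"

definition survival_occupation :: "nat \<Rightarrow> rmat \<Rightarrow> (nat \<Rightarrow> real) \<Rightarrow> nat \<Rightarrow> (nat \<Rightarrow> real) \<Rightarrow> real" where
  "survival_occupation d P \<pi> n g =
     (\<Sum>r=0..n. \<Sum>x\<in>{1..d}. \<pi> x *
        (\<Sum>u\<in>{1..d}. mat_pow d P r x u * g u * (\<Sum>t\<in>{1..d}. mat_pow d P (n - r) u t)))"

lemma sum_survival_pathprob:
  "(\<Sum>xs\<in>{xs \<in> trajectories d n. Tgt n xs}. pathprob P \<pi> xs) = survival_mass d P \<pi> n"
proof -
  have "(\<Sum>ys\<in>state_lists d n. pathprob P \<pi> (x # ys)) = \<pi> x * (\<Sum>t\<in>{1..d}. mat_pow d P n x t)"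
    if x: "x \<in> {1..d}" for x
  proof -
    have "(\<Sum>ys\<in>state_lists d n. pathprob P \<pi> (x # ys)) = \<pi> x * (\<Sum>ys\<in>state_lists d n. chain_weight P (x # ys))"
      using x by (simp add: pathprob_Cons sum_distrib_left)
    then show ?thesis by (simp only: sum_chain_weight[OF x])
  qed
  then show ?thesis
    unfolding survival_trajectories sum_state_lists_Suc survival_mass_def by (rule sum.cong[OF refl])
qed

lemma sum_survival_occupation:
  "(\<Sum>xs\<in>{xs \<in> trajectories d n. Tgt n xs}. pathprob P \<pi> xs * (\<Sum>m=0..n. g (xs ! m)))
   = survival_occupation d P \<pi> n g"
proof -
  have "(\<Sum>xs\<in>state_lists d (Suc n). pathprob P \<pi> xs * g (xs ! m))
      = (\<Sum>x\<in>{1..d}. \<pi> x *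
           (\<Sum>u\<in>{1..d}. mat_pow d P m x u * g u * (\<Sum>t\<in>{1..d}. mat_pow d P (n - m) u t)))"
    if m: "m \<le> n" for m
    unfolding sum_state_lists_Suc
  proof (rule sum.cong[OF refl])
    fix x assume x: "x \<in> {1..d}"
    have "(\<Sum>ys\<in>state_lists d n. pathprob P \<pi> (x # ys) * g ((x # ys) ! m))
      = \<pi> x * (\<Sum>ys\<in>state_lists d n. chain_weight P (x # ys) * g ((x # ys) ! m))"
      using x by (simp add: pathprob_Cons sum_distrib_left mult.assoc)
    then show "(\<Sum>ys\<in>state_lists d n. pathprob P \<pi> (x # ys) * g ((x # ys) ! m))
      = \<pi> x * (\<Sum>u\<in>{1..d}. mat_pow d P m x u * g u * (\<Sum>t\<in>{1..d}. mat_pow d P (n - m) u t))"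
      by (simp only: sum_chain_weight_nth[OF x m])
  qed
  then show ?thesis
    unfolding survival_trajectories survival_occupation_def sum_distrib_left
    by (subst sum.swap) (simp add: atLeast0AtMost)
qed

lemma cond_exp_occupation:
  "cond_exp d P \<pi> n (\<lambda>xs. card {m\<in>{0..n}. S (xs ! m)} / (real n + 1))
   = survival_occupation d P \<pi> n (\<lambda>u. of_bool (S u)) / ((real n + 1) * survival_mass d P \<pi> n)"
proof -
  have "{m\<in>{0..n}. S (xs ! m)} = {0..n} \<inter> {m. S (xs ! m)}" for xs
    by auto
  then have "real (card {m\<in>{0..n}. S (xs ! m)}) = (\<Sum>m=0..n. of_bool (S (xs ! m)))" for xs
    by simp
  then show ?thesis
    unfolding cond_exp_def sum_survival_pathprob[symmetric]
    by (simp add: sum_survival_occupation[symmetric] sum_divide_distrib[symmetric] mult.commute)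
qed

section \<open>Matrix powers as sums over admissible paths\<close>

locale frobenius_form =
  fixes d :: nat and P :: rmat and ds :: "nat list"
  assumes sum_ds: "sum_list ds = d"
    and upper_blocks_zero: "\<forall>i\<in>{1..length ds}. \<forall>j\<in>{1..length ds}. j > i \<longrightarrow>
                              (\<forall>s\<in>Iset ds i. \<forall>t\<in>Iset ds j. P s t = 0)"
begin

lemma blk_upper_zero:
  assumes "i \<in> {1..length ds}" "j \<in> {1..length ds}" "i < j"
  shows "blk P ds i j = zmat"
proof -
  have "\<forall>s\<in>Iset ds i. \<forall>t\<in>Iset ds j. P s t = 0"
    using upper_blocks_zero assms by blast
  then show ?thesis by (auto simp: blk_def zmat_def fun_eq_iff)
qed

lemma obtain_block:
  assumes "s \<in> {1..d}"
  obtains i where "i \<in> {1..length ds}" "s \<in> Iset ds i"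
  using Iset_cover[of s ds] assms sum_ds by auto

lemma Iset_states: "i \<in> {1..length ds} \<Longrightarrow> Iset ds i \<subseteq> {1..d}"
  using Iset_subset[of i ds] sum_ds by auto

lemma Qpath_Suc:
  assumes "\<theta> \<in> Paths P ds"
  shows "Qpath d P ds \<theta> (Suc m) s t =
    mmul d (blk P ds (hd \<theta>) (hd \<theta>)) (Qpath d P ds \<theta> m) s t
    + (if 2 \<le> length \<theta> then mmul d (blk P ds (hd \<theta>) (hd (tl \<theta>))) (Qpath d P ds (tl \<theta>) m) s t else 0)"
proof -
  have "admissible P ds \<theta>" using assms by (simp add: Paths_def)
  then consider a where "\<theta> = [a]" | a b r where "\<theta> = a # b # r" "a \<in> {1..length ds}"
    by (cases \<theta> rule: remdups_adj.cases) auto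
  then show ?thesis
  proof cases
    case 1
    then show ?thesis by (simp add: Qpath_single)
  next
    case 2
    then show ?thesis by (simp add: Qpath_Cons_Cons_Suc sum_ds)
  qed
qed

lemma sum_Paths_Qpath_0:
  assumes s: "s \<in> {1..d}"
  shows "(\<Sum>\<theta>\<in>Paths P ds. Qpath d P ds \<theta> 0 s t) = mat_pow d P 0 s t"
proof -
  obtain i where i: "i \<in> {1..length ds}" "s \<in> Iset ds i" using obtain_block[OF s] .
  have "(\<Sum>\<theta>\<in>Paths P ds. Qpath d P ds \<theta> 0 s t) = (\<Sum>\<theta>\<in>{\<theta>\<in>Paths P ds. length \<theta> = 1}. blkId ds (hd \<theta>) s t)"
    unfolding sum.inter_filter[OF finite_Paths] by (intro sum.cong) (auto simp: Qpath_def zmat_def)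
  also have "\<dots> = (\<Sum>a\<in>{1..length ds}. blkId ds a s t)"
  proof -
    have "{\<theta>\<in>Paths P ds. length \<theta> = 1} = (\<lambda>a. [a]) ` {1..length ds}"
      by (auto simp: Paths_def length_Suc_conv)
    then show ?thesis by (simp add: sum.reindex inj_on_def)
  qed
  also have "\<dots> = (\<Sum>a\<in>{1..length ds}. if a = i then (if s = t then 1 else 0) else 0)"
    using i by (intro sum.cong) (auto simp: blkId_def dest: Iset_unique)
  also have "\<dots> = (if s = t then 1 else 0)"
    using i by simp
  finally show ?thesis by simp
qed

lemma sum_Paths_Qpath_Suc:
  assumes s: "s \<in> Iset ds i"
  shows "(\<Sum>\<theta>\<in>Paths P ds. Qpath d P ds \<theta> (Suc m) s t) =
    (\<Sum>\<theta>\<in>{\<theta>\<in>Paths P ds. hd \<theta> = i}. mmul d (blk P ds i i) (Qpath d P ds \<theta> m) s t)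
    + (\<Sum>\<theta>\<in>{\<theta>\<in>Paths P ds. hd \<theta> = i \<and> 2 \<le> length \<theta>}.
         mmul d (blk P ds i (hd (tl \<theta>))) (Qpath d P ds (tl \<theta>) m) s t)"
proof -
  define F where "F \<theta> = mmul d (blk P ds i i) (Qpath d P ds \<theta> m) s t
    + (if 2 \<le> length \<theta> then mmul d (blk P ds i (hd (tl \<theta>))) (Qpath d P ds (tl \<theta>) m) s t else 0)"
    for \<theta>
  have "(\<Sum>\<theta>\<in>Paths P ds. Qpath d P ds \<theta> (Suc m) s t) = (\<Sum>\<theta>\<in>Paths P ds. if hd \<theta> = i then F \<theta> else 0)"
    using s by (intro sum.cong) (auto simp: Qpath_Suc F_def mmul_blk_other)
  also have "\<dots> = (\<Sum>\<theta>\<in>{\<theta>\<in>Paths P ds. hd \<theta> = i}. F \<theta>)"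
    by (rule sum.inter_filter[OF finite_Paths, symmetric])
  also have "\<dots> = (\<Sum>\<theta>\<in>{\<theta>\<in>Paths P ds. hd \<theta> = i}. mmul d (blk P ds i i) (Qpath d P ds \<theta> m) s t)
    + (\<Sum>\<theta>\<in>{\<theta>\<in>Paths P ds. hd \<theta> = i \<and> 2 \<le> length \<theta>}.
         mmul d (blk P ds i (hd (tl \<theta>))) (Qpath d P ds (tl \<theta>) m) s t)"
    unfolding F_def sum.distrib
    by (simp add: sum.inter_filter[symmetric] finite_Paths conj_commute conj_left_commute)
  finally show ?thesis .
qed

text \<open>By the Frobenius form a step out of block i enters block i itself or a block
  j < i with Q_ij \<noteq> 0; prefixing i to the paths starting in j accounts for the latter.\<close>
lemma mmul_sum_Paths_Qpath:
  assumes i: "i \<in> {1..length ds}" and s: "s \<in> Iset ds i"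
  shows "mmul d P (\<lambda>u t. \<Sum>\<theta>\<in>Paths P ds. Qpath d P ds \<theta> m u t) s t =
    (\<Sum>\<theta>\<in>{\<theta>\<in>Paths P ds. hd \<theta> = i}. mmul d (blk P ds i i) (Qpath d P ds \<theta> m) s t)
    + (\<Sum>\<theta>\<in>{\<theta>\<in>Paths P ds. hd \<theta> = i \<and> 2 \<le> length \<theta>}.
         mmul d (blk P ds i (hd (tl \<theta>))) (Qpath d P ds (tl \<theta>) m) s t)"
proof -
  define X where "X \<theta> = mmul d (blk P ds i (hd \<theta>)) (Qpath d P ds \<theta> m) s t" for \<theta>
  define A where "A = {\<theta>\<in>Paths P ds. hd \<theta> = i}"
  define C where "C = {\<theta>\<in>Paths P ds. hd \<theta> < i \<and> blk P ds i (hd \<theta>) \<noteq> zmat}"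
  have "mmul d P (\<lambda>u t. \<Sum>\<theta>\<in>Paths P ds. Qpath d P ds \<theta> m u t) s t = (\<Sum>\<theta>\<in>Paths P ds. X \<theta>)"
  proof -
    have P_blk: "P s u * Qpath d P ds \<theta> m u t = blk P ds i (hd \<theta>) s u * Qpath d P ds \<theta> m u t"
      if "\<theta> \<in> Paths P ds" for \<theta> u
      using Qpath_nonzero_blocks(1)[OF that] s by (auto simp: blk_def)
    show ?thesis
      unfolding X_def mmul_sum_right[OF finite_Paths]
      by (intro sum.cong refl) (simp add: mmul_def P_blk)
  qed
  also have "\<dots> = (\<Sum>\<theta>\<in>A \<union> C. X \<theta>)"
  proof (rule sum.mono_neutral_right[OF finite_Paths])
    show "A \<union> C \<subseteq> Paths P ds" by (auto simp: A_def C_def)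
    show "\<forall>\<theta>\<in>Paths P ds - (A \<union> C). X \<theta> = 0"
    proof
      fix \<theta> assume \<theta>: "\<theta> \<in> Paths P ds - (A \<union> C)"
      then have "hd \<theta> \<in> {1..length ds}" by (auto simp: Paths_def dest: admissible_hd_last)
      with \<theta> i have "blk P ds i (hd \<theta>) = zmat"
        using blk_upper_zero[of i "hd \<theta>"] by (auto simp: A_def C_def)
      then show "X \<theta> = 0" by (simp add: X_def) (simp add: zmat_def)
    qed
  qed
  also have "\<dots> = (\<Sum>\<theta>\<in>A. X \<theta>) + (\<Sum>\<theta>\<in>C. X \<theta>)"
    by (rule sum.union_disjoint) (auto simp: A_def C_def intro: finite_subset[OF _ finite_Paths])
  also have "(\<Sum>\<theta>\<in>C. X \<theta>) = (\<Sum>\<theta>\<in>{\<theta>\<in>Paths P ds. hd \<theta> = i \<and> 2 \<le> length \<theta>}. X (tl \<theta>))"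
    unfolding C_def by (rule sum.reindex_bij_betw[OF Paths_tl_bij[OF i], symmetric])
  finally show ?thesis by (simp add: X_def A_def)
qed

lemma sum_Paths_Qpath:
  "s \<in> {1..d} \<Longrightarrow> (\<Sum>\<theta>\<in>Paths P ds. Qpath d P ds \<theta> m s t) = mat_pow d P m s t"
proof (induction m arbitrary: s)
  case 0
  then show ?case by (rule sum_Paths_Qpath_0)
next
  case (Suc m)
  obtain i where "i \<in> {1..length ds}" "s \<in> Iset ds i"
    using obtain_block[OF Suc.prems] .
  moreover have "mat_pow d P (Suc m) s t = mmul d P (\<lambda>u t. \<Sum>\<theta>\<in>Paths P ds. Qpath d P ds \<theta> m u t) s t"
    by (simp add: mmul_def Suc.IH)
  ultimately show ?case
    by (simp add: sum_Paths_Qpath_Suc mmul_sum_Paths_Qpath)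
qed

lemma sum_Paths_Qpath_col:
  assumes "s \<in> {1..d}" "u \<in> Iset ds l"
  shows "(\<Sum>\<alpha>\<in>{\<alpha>\<in>Paths P ds. last \<alpha> = l}. Qpath d P ds \<alpha> r s u) = mat_pow d P r s u"
proof -
  have "(\<Sum>\<alpha>\<in>{\<alpha>\<in>Paths P ds. last \<alpha> = l}. Qpath d P ds \<alpha> r s u) = (\<Sum>\<alpha>\<in>Paths P ds. Qpath d P ds \<alpha> r s u)"
  proof (rule sum.mono_neutral_left[OF finite_Paths])
    show "\<forall>\<alpha>\<in>Paths P ds - {\<alpha>\<in>Paths P ds. last \<alpha> = l}. Qpath d P ds \<alpha> r s u = 0"
      using assms(2) by (auto intro: Qpath_col_outside)
  qed auto
  then show ?thesis using sum_Paths_Qpath[OF assms(1)] by simp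
qed

lemma sum_Paths_Qpath_row:
  assumes "u \<in> Iset ds l" "l \<in> {1..length ds}"
  shows "(\<Sum>\<beta>\<in>{\<beta>\<in>Paths P ds. hd \<beta> = l}. Qpath d P ds \<beta> r u t) = mat_pow d P r u t"
proof -
  have "(\<Sum>\<beta>\<in>{\<beta>\<in>Paths P ds. hd \<beta> = l}. Qpath d P ds \<beta> r u t) = (\<Sum>\<beta>\<in>Paths P ds. Qpath d P ds \<beta> r u t)"
  proof (rule sum.mono_neutral_left[OF finite_Paths])
    show "\<forall>\<beta>\<in>Paths P ds - {\<beta>\<in>Paths P ds. hd \<beta> = l}. Qpath d P ds \<beta> r u t = 0"
      using assms(1) by (auto intro: Qpath_row_outside)
  qed auto
  moreover have "u \<in> {1..d}" using Iset_states assms by blast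
  ultimately show ?thesis by (simp add: sum_Paths_Qpath)
qed

lemma sum_Paths_through_Qpath:
  assumes l: "l \<in> {1..length ds}" and s: "s \<in> {1..d}"
  shows "(\<Sum>\<theta>\<in>Paths_through P ds l. Qpath d P ds (lowpart \<theta> l) r s u * Qpath d P ds (uppart \<theta> l) r' u t)
    = of_bool (u \<in> Iset ds l) * (mat_pow d P r s u * mat_pow d P r' u t)"
proof (cases "u \<in> Iset ds l")
  case True
  let ?A = "{\<alpha>\<in>Paths P ds. last \<alpha> = l}" and ?B = "{\<beta>\<in>Paths P ds. hd \<beta> = l}"
  have "(\<Sum>\<theta>\<in>Paths_through P ds l. Qpath d P ds (lowpart \<theta> l) r s u * Qpath d P ds (uppart \<theta> l) r' u t)
    = (\<Sum>(\<alpha>, \<beta>)\<in>?A \<times> ?B. Qpath d P ds \<alpha> r s u * Qpath d P ds \<beta> r' u t)"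
    using sum.reindex_bij_betw[OF Paths_through_bij,
        of "\<lambda>(\<alpha>, \<beta>). Qpath d P ds \<alpha> r s u * Qpath d P ds \<beta> r' u t"]
    by simp
  also have "\<dots> = (\<Sum>\<alpha>\<in>?A. Qpath d P ds \<alpha> r s u) * (\<Sum>\<beta>\<in>?B. Qpath d P ds \<beta> r' u t)"
    by (simp add: sum_product sum.cartesian_product)
  also have "\<dots> = mat_pow d P r s u * mat_pow d P r' u t"
    using True l s by (simp add: sum_Paths_Qpath_col sum_Paths_Qpath_row)
  finally show ?thesis using True by simp
next
  case False
  have "Qpath d P ds (lowpart \<theta> l) r s u = 0" if "\<theta> \<in> Paths_through P ds l" for \<theta>
    using False Qpath_nonzero_blocks(2)[OF Paths_through_parts(1)[OF that]]
    by (metis Paths_through_parts(4)[OF that])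
  with False show ?thesis by simp
qed

lemma sum_Paths_through_Qpath_weighted:
  assumes l: "l \<in> {1..length ds}" and s: "s \<in> {1..d}"
  shows "(\<Sum>\<theta>\<in>Paths_through P ds l. \<Sum>u\<in>{1..d}.
            Qpath d P ds (lowpart \<theta> l) r s u * h u * Qpath d P ds (uppart \<theta> l) r' u t)
    = (\<Sum>u\<in>{1..d}. mat_pow d P r s u * (of_bool (u \<in> Iset ds l) * h u) * mat_pow d P r' u t)"
proof -
  have "(\<Sum>\<theta>\<in>Paths_through P ds l. \<Sum>u\<in>{1..d}.
            Qpath d P ds (lowpart \<theta> l) r s u * h u * Qpath d P ds (uppart \<theta> l) r' u t)
      = (\<Sum>u\<in>{1..d}. h u * (\<Sum>\<theta>\<in>Paths_through P ds l.
            Qpath d P ds (lowpart \<theta> l) r s u * Qpath d P ds (uppart \<theta> l) r' u t))"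
    by (subst sum.swap) (simp add: sum_distrib_left mult_ac)
  then show ?thesis
    by (simp add: sum_Paths_through_Qpath[OF l s] mult_ac)
qed

lemma sum_blocks_eq_sum_states:
  assumes "a \<in> {1..length ds}" "b \<in> {1..length ds}" "block_supported ds G a b"
  shows "(\<Sum>s\<in>Iset ds a. \<Sum>t\<in>Iset ds b. \<pi> s * G s t) = (\<Sum>s\<in>{1..d}. \<Sum>t\<in>{1..d}. \<pi> s * G s t)"
proof -
  have zero: "G s t = 0" if "s \<notin> Iset ds a \<or> t \<notin> Iset ds b" for s t
    using assms(3) that by (auto simp: block_supported_def)
  have "(\<Sum>s\<in>Iset ds a. \<Sum>t\<in>Iset ds b. \<pi> s * G s t) = (\<Sum>s\<in>Iset ds a. \<Sum>t\<in>{1..d}. \<pi> s * G s t)"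
    using Iset_states[OF assms(2)] zero by (intro sum.cong refl sum.mono_neutral_left) auto
  also have "\<dots> = (\<Sum>s\<in>{1..d}. \<Sum>t\<in>{1..d}. \<pi> s * G s t)"
    using Iset_states[OF assms(1)] zero by (intro sum.mono_neutral_left) auto
  finally show ?thesis .
qed

lemma sum_Paths_entries:
  "(\<Sum>\<theta>\<in>Paths P ds. \<Sum>s\<in>Iset ds (hd \<theta>). \<Sum>t\<in>Iset ds (last \<theta>). \<pi> s * Qpath d P ds \<theta> n s t)
   = survival_mass d P \<pi> n"
proof -
  have "(\<Sum>\<theta>\<in>Paths P ds. \<Sum>s\<in>Iset ds (hd \<theta>). \<Sum>t\<in>Iset ds (last \<theta>). \<pi> s * Qpath d P ds \<theta> n s t)
      = (\<Sum>\<theta>\<in>Paths P ds. \<Sum>s\<in>{1..d}. \<Sum>t\<in>{1..d}. \<pi> s * Qpath d P ds \<theta> n s t)"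
    by (intro sum.cong refl sum_blocks_eq_sum_states block_supported_Qpath Paths_nonempty)
       (auto simp: Paths_def dest: admissible_hd_last)
  also have "\<dots> = (\<Sum>s\<in>{1..d}. \<Sum>t\<in>{1..d}. \<Sum>\<theta>\<in>Paths P ds. \<pi> s * Qpath d P ds \<theta> n s t)"
    by (subst sum.swap) (intro sum.cong refl sum.swap)
  also have "\<dots> = survival_mass d P \<pi> n"
    by (simp add: survival_mass_def sum_distrib_left[symmetric] sum_Paths_Qpath)
  finally show ?thesis .
qed

lemma sum_Paths_through_weighted:
  assumes l: "l \<in> {1..length ds}"
  shows "(\<Sum>\<theta>\<in>Paths_through P ds l. \<Sum>r=0..n. \<Sum>s\<in>Iset ds (hd \<theta>). \<Sum>t\<in>Iset ds (last \<theta>).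
            \<pi> s * (\<Sum>u\<in>{1..d}. Qpath d P ds (lowpart \<theta> l) r s u * h u * Qpath d P ds (uppart \<theta> l) (n - r) u t))
    = survival_occupation d P \<pi> n (\<lambda>u. of_bool (u \<in> Iset ds l) * h u)"
proof -
  define G where "G \<theta> r s t =
    (\<Sum>u\<in>{1..d}. Qpath d P ds (lowpart \<theta> l) r s u * h u * Qpath d P ds (uppart \<theta> l) (n - r) u t)"
    for \<theta> r s t
  have supp: "block_supported ds (G \<theta> r) (hd \<theta>) (last \<theta>)" if "\<theta> \<in> Paths_through P ds l" for \<theta> r
    unfolding block_supported_def G_def
    by (metis (no_types, lifting) Paths_through_parts(1,2,3,6)[OF that] Qpath_nonzero_blocks mult_eq_0_iff sum.neutral)
  have "(\<Sum>\<theta>\<in>Paths_through P ds l. \<Sum>r=0..n. \<Sum>s\<in>Iset ds (hd \<theta>). \<Sum>t\<in>Iset ds (last \<theta>). \<pi> s * G \<theta> r s t)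
      = (\<Sum>\<theta>\<in>Paths_through P ds l. \<Sum>r=0..n. \<Sum>s\<in>{1..d}. \<Sum>t\<in>{1..d}. \<pi> s * G \<theta> r s t)"
    by (intro sum.cong refl sum_blocks_eq_sum_states supp)
       (auto simp: Paths_through_def Paths_def dest: admissible_hd_last)
  also have "\<dots> = (\<Sum>r=0..n. \<Sum>s\<in>{1..d}. \<Sum>t\<in>{1..d}. \<pi> s * (\<Sum>\<theta>\<in>Paths_through P ds l. G \<theta> r s t))"
    unfolding sum_distrib_left
    by (subst sum.swap) (intro sum.cong refl, subst sum.swap, intro sum.cong refl sum.swap)
  also have "\<dots> = survival_occupation d P \<pi> n (\<lambda>u. of_bool (u \<in> Iset ds l) * h u)"
    unfolding survival_occupation_def
  proof (intro sum.cong refl)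
    fix r s assume s: "s \<in> {1..d}"
    define w where "w u = mat_pow d P r s u * (of_bool (u \<in> Iset ds l) * h u)" for u
    have G_eq: "(\<Sum>\<theta>\<in>Paths_through P ds l. G \<theta> r s t) = (\<Sum>u\<in>{1..d}. w u * mat_pow d P (n - r) u t)" for t
      unfolding G_def w_def by (rule sum_Paths_through_Qpath_weighted[OF l s])
    have "(\<Sum>t\<in>{1..d}. \<pi> s * (\<Sum>\<theta>\<in>Paths_through P ds l. G \<theta> r s t))
        = \<pi> s * (\<Sum>t\<in>{1..d}. \<Sum>u\<in>{1..d}. w u * mat_pow d P (n - r) u t)"
      unfolding G_eq sum_distrib_left ..
    also have "\<dots> = \<pi> s * (\<Sum>u\<in>{1..d}. \<Sum>t\<in>{1..d}. w u * mat_pow d P (n - r) u t)"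
      by (subst sum.swap) (rule refl)
    finally show "(\<Sum>t\<in>{1..d}. \<pi> s * (\<Sum>\<theta>\<in>Paths_through P ds l. G \<theta> r s t))
        = \<pi> s * (\<Sum>u\<in>{1..d}. mat_pow d P r s u * (of_bool (u \<in> Iset ds l) * h u) *
                      (\<Sum>t\<in>{1..d}. mat_pow d P (n - r) u t))"
      by (simp add: w_def sum_distrib_left)
  qed
  finally show ?thesis by (simp add: G_def)
qed

lemma sum_Paths_through_mmul:
  assumes "l \<in> {1..length ds}"
  shows "(\<Sum>\<theta>\<in>Paths_through P ds l. \<Sum>r=0..n. \<Sum>s\<in>Iset ds (hd \<theta>). \<Sum>t\<in>Iset ds (last \<theta>).
          \<pi> s * mmul d (Qpath d P ds (lowpart \<theta> l) r) (Qpath d P ds (uppart \<theta> l) (n - r)) s t)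
    = survival_occupation d P \<pi> n (\<lambda>u. of_bool (u \<in> Iset ds l))"
  using sum_Paths_through_weighted[OF assms, where h="\<lambda>_. 1"] by (simp add: mmul_def)

lemma sum_Paths_through_unit_mat:
  assumes "l \<in> {1..length ds}" "s0 \<in> Iset ds l"
  shows "(\<Sum>\<theta>\<in>Paths_through P ds l. \<Sum>r=0..n. \<Sum>s\<in>Iset ds (hd \<theta>). \<Sum>t\<in>Iset ds (last \<theta>).
          \<pi> s * mmul d (mmul d (Qpath d P ds (lowpart \<theta> l) r) (\<lambda>i j. if i = s0 \<and> j = s0 then 1 else 0))
                        (Qpath d P ds (uppart \<theta> l) (n - r)) s t)
    = survival_occupation d P \<pi> n (\<lambda>u. of_bool (u = s0))"
proof -
  have "(\<lambda>u. of_bool (u \<in> Iset ds l) * of_bool (u = s0)) = (\<lambda>u. of_bool (u = s0) :: real)"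
    using assms(2) by auto
  then show ?thesis
    using sum_Paths_through_weighted[OF assms(1), where h="\<lambda>u. of_bool (u = s0)"]
    by (simp only: mmul_unit_mat)
qed

end

theorem corollary3p3:
  fixes d :: nat and P :: "nat \<Rightarrow> nat \<Rightarrow> real" and \<pi> :: "nat \<Rightarrow> real"
    and ds :: "nat list" and l n :: nat
  assumes d2: "d \<ge> 2"
    and P_nonneg: "\<forall>i\<in>{0..d}. \<forall>j\<in>{0..d}. P i j \<ge> 0"
    and P_rows: "\<forall>i\<in>{0..d}. (\<Sum>j\<in>{0..d}. P i j) = 1"
    and P_absorb: "P 0 0 = 1" "\<forall>j\<in>{1..d}. P 0 j = 0"
    and R_nz: "\<exists>i\<in>{1..d}. P i 0 \<noteq> 0"
    and Q_nz: "\<exists>i\<in>{1..d}. \<exists>j\<in>{1..d}. P i j \<noteq> 0"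
    and Q_eig: "\<forall>(ev::complex) (v::nat \<Rightarrow> complex).
                  (\<exists>i\<in>{1..d}. v i \<noteq> 0) \<and>
                  (\<forall>i\<in>{1..d}. (\<Sum>j\<in>{1..d}. complex_of_real (P i j) * v j) = ev * v i)
                  \<longrightarrow> cmod ev < 1"
    and pi_nonneg: "\<forall>s\<in>{1..d}. \<pi> s \<ge> 0"
    and pi_sum: "(\<Sum>s\<in>{1..d}. \<pi> s) = 1"
    and ds_pos: "\<forall>i<length ds. ds ! i > 0"
    and ds_sum: "sum_list ds = d"
    and frob_tri: "\<forall>i\<in>{1..length ds}. \<forall>j\<in>{1..length ds}. j > i \<longrightarrow>
                     (\<forall>s\<in>Iset ds i. \<forall>t\<in>Iset ds j. P s t = 0)"
    and frob_evpos: "\<forall>i\<in>{1..length ds}. \<exists>N. \<forall>m\<ge>N.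
                       \<forall>s\<in>Iset ds i. \<forall>t\<in>Iset ds i. bpow d P ds i m s t > 0"
    and l_range: "l \<in> {1..length ds}"
    and n_pos: "n \<ge> 1"
  shows
   "cond_exp d P \<pi> n
       (\<lambda>xs. card {m\<in>{0..n}. xs ! m \<in> Iset ds l} / (real n + 1))
    = (\<Sum>\<theta>\<in>Paths_through P ds l. \<Sum>r=0..n.
          \<Sum>s\<in>Iset ds (hd \<theta>). \<Sum>t\<in>Iset ds (last \<theta>).
            \<pi> s * mmul d (Qpath d P ds (lowpart \<theta> l) r)
                          (Qpath d P ds (uppart \<theta> l) (n - r)) s t)
      / ((real n + 1) * (\<Sum>\<theta>\<in>Paths P ds.
          \<Sum>s\<in>Iset ds (hd \<theta>). \<Sum>t\<in>Iset ds (last \<theta>). \<pi> s * Qpath d P ds \<theta> n s t))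
    \<and>
    (\<forall>s0\<in>Iset ds l.
      cond_exp d P \<pi> n
       (\<lambda>xs. card {m\<in>{0..n}. xs ! m = s0} / (real n + 1))
      = (\<Sum>\<theta>\<in>Paths_through P ds l. \<Sum>r=0..n.
          \<Sum>s\<in>Iset ds (hd \<theta>). \<Sum>t\<in>Iset ds (last \<theta>).
            \<pi> s * mmul d (mmul d (Qpath d P ds (lowpart \<theta> l) r)
                                   (\<lambda>i j. if i = s0 \<and> j = s0 then 1 else 0))
                          (Qpath d P ds (uppart \<theta> l) (n - r)) s t)
      / ((real n + 1) * (\<Sum>\<theta>\<in>Paths P ds.
          \<Sum>s\<in>Iset ds (hd \<theta>). \<Sum>t\<in>Iset ds (last \<theta>). \<pi> s * Qpath d P ds \<theta> n s t)))"
proof -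
  interpret frobenius_form d P ds
    using ds_sum frob_tri by unfold_locales
  show ?thesis
    using cond_exp_occupation[where S="\<lambda>x. x \<in> Iset ds l"]
      cond_exp_occupation[where S="\<lambda>x. x = s0" for s0]
      sum_Paths_entries sum_Paths_through_mmul[OF l_range]
      sum_Paths_through_unit_mat[OF l_range]
    by simp
qed

end
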